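(* Let $\gamma:S^1\to\mathbb R^3$ be a smooth immersed closed curve and consider: $(\Gamma_1)$ each vertical plane meets $\gamma$ in at most two points (i.e. $|P\cap\gamma|\le2$); $(\Gamma_1')$ $P_{xy}|_\gamma$ is injective and $\bar\gamma=P_{xy}\circ\gamma$ is strictly convex; $(\Gamma_2)$ $\gamma$ satisfies a three-point condition with some constant $\Delta$; $(\Gamma_3)$ the slopes of all secant lines of $\gamma$ are bounded by some constant $\Delta$; $(\Gamma_4)$ the slopes of all tangent lines of $\gamma$ are bounded by some constant $\Delta$; $(\Gamma_4')$ $\gamma$ has no vertical tangent lines; $(\Gamma_5)$ the curvature $k$ of $\gamma$ is positive and the slopes of all osculating planes are bounded by some constant $\Delta$. Then: (a) $(\Gamma_1)\Leftrightarrow(\Gamma_1')$ and $(\Gamma_4)\Leftrightarrow(\Gamma_4')$; (b) $(\Gamma_2)\Rightarrow(\Gamma_3)\Rightarrow(\Gamma_4)$ with the same constant $\Delta$; (c) if $(\Gamma_1)$ holds, then $(\Gamma_4)\Rightarrow(\Gamma_3)$ (with possibly different $\Delta$); (d) if $(\Gamma_1)$ and $(\Gamma_5)$ hold, then $(\Gamma_3)\Rightarrow(\Gamma_2)$ (with possibly different $\Delta$).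
   Context: $P_{xy}$ projects $\mathbb R^3$ onto the $xy$-plane; vertical means perpendicular to the $xy$-plane. An immersed planar curve is strictly convex if it meets every line in at most two points. The slope $S_L$ of a line $L$ is $\tan\Theta$ with $\Theta\in[0,\pi/2]$ the angle between $L$ and the $xy$-plane; the slope $S_P$ of a plane is $\tan$ of its dihedral angle with the $xy$-plane; vertical lines/planes have slope $+\infty$. A secant line of $\gamma$ is a line meeting $\gamma$ in at least two distinct points. For $k>0$, the osculating plane at $\gamma(u)$ is the plane through $\gamma(u)$ spanned by the unit tangent $T(u)$ and unit normal $N(u)$. $|P\cap\gamma|:=\#\{u\in S^1:\gamma(u)\in P\}$. $\gamma$ satisfies a three-point condition with constant $\Delta\in[0,\infty)$ if $S_P\le\Delta$ for every plane $P$ with $|P\cap\gamma|\ge3$. *)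

theory Defs
  imports "HOL-Analysis.Analysis"
begin

text \<open>Curves gamma : S^1 -> R^3 are represented as 1-periodic maps real => real^3;
  S^1 is parametrised by the parameters u in {0..<1}.\<close>

fun vderiv_iter :: "nat \<Rightarrow> (real \<Rightarrow> real^3) \<Rightarrow> real \<Rightarrow> real^3" where
  "vderiv_iter 0 f = f"
| "vderiv_iter (Suc n) f = (\<lambda>t. vector_derivative (vderiv_iter n f) (at t))"

definition smooth_map :: "(real \<Rightarrow> real^3) \<Rightarrow> bool" where
  "smooth_map f \<longleftrightarrow> (\<forall>n t. vderiv_iter n f differentiable (at t))"

definition smooth_immersed_closed_curve :: "(real \<Rightarrow> real^3) \<Rightarrow> bool" where
  "smooth_immersed_closed_curve \<gamma> \<longleftrightarrow>
     smooth_map \<gamma> \<and> (\<forall>t. \<gamma> (t + 1) = \<gamma> t) \<and>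
     (\<forall>t. vector_derivative \<gamma> (at t) \<noteq> 0)"

definition hits :: "(real \<Rightarrow> 'a) \<Rightarrow> 'a set \<Rightarrow> real set" where
  "hits \<gamma> P = {u \<in> {0..<1}. \<gamma> u \<in> P}"

definition npts :: "(real \<Rightarrow> 'a) \<Rightarrow> 'a set \<Rightarrow> enat" where
  "npts \<gamma> P = (if finite (hits \<gamma> P) then enat (card (hits \<gamma> P)) else \<infinity>)"

definition plane :: "real^3 \<Rightarrow> real \<Rightarrow> (real^3) set" where
  "plane n c = {p. n \<bullet> p = c}"

text \<open>A plane is vertical iff its normal is horizontal.\<close>
definition vertical_normal :: "real^3 \<Rightarrow> bool" where
  "vertical_normal n \<longleftrightarrow> n \<noteq> 0 \<and> n $ 3 = 0"

text \<open>Slope of the plane with normal n: tan of the dihedral angle with the xy-plane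
  (the angle between n and the vertical axis); +infinity for vertical planes.\<close>
definition plane_slope :: "real^3 \<Rightarrow> ereal" where
  "plane_slope n = (if n $ 3 = 0 then \<infinity>
      else ereal (sqrt ((n $ 1)^2 + (n $ 2)^2) / \<bar>n $ 3\<bar>))"

text \<open>Slope of a line with direction v \<noteq> 0: tan of its angle with the xy-plane;
  +infinity for vertical lines.\<close>
definition line_slope :: "real^3 \<Rightarrow> ereal" where
  "line_slope v = (if v $ 1 = 0 \<and> v $ 2 = 0 then \<infinity>
      else ereal (\<bar>v $ 3\<bar> / sqrt ((v $ 1)^2 + (v $ 2)^2)))"

definition Pxy :: "real^3 \<Rightarrow> real^2" where
  "Pxy p = vector [p $ 1, p $ 2]"

text \<open>An immersed planar curve is strictly convex iff it meets every line in at most two points.\<close>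
definition strictly_convex_planar :: "(real \<Rightarrow> real^2) \<Rightarrow> bool" where
  "strictly_convex_planar \<beta> \<longleftrightarrow>
     (\<forall>a c. a \<noteq> 0 \<longrightarrow> npts \<beta> {q. a \<bullet> q = c} \<le> 2)"

definition unit_tangent :: "(real \<Rightarrow> real^3) \<Rightarrow> real \<Rightarrow> real^3" where
  "unit_tangent \<gamma> u = vector_derivative \<gamma> (at u) /\<^sub>R norm (vector_derivative \<gamma> (at u))"

text \<open>Curvature k = |dT/ds|, with ds = |gamma'| du.\<close>
definition curvature :: "(real \<Rightarrow> real^3) \<Rightarrow> real \<Rightarrow> real" where
  "curvature \<gamma> u = norm (vector_derivative (unit_tangent \<gamma>) (at u))
                      / norm (vector_derivative \<gamma> (at u))"

definition unit_normal :: "(real \<Rightarrow> real^3) \<Rightarrow> real \<Rightarrow> real^3" where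
  "unit_normal \<gamma> u = vector_derivative (unit_tangent \<gamma>) (at u)
                      /\<^sub>R norm (vector_derivative (unit_tangent \<gamma>) (at u))"

text \<open>Osculating plane at gamma(u): through gamma(u), spanned by T(u), N(u);
  its normal is T(u) x N(u).\<close>
definition osculating_normal :: "(real \<Rightarrow> real^3) \<Rightarrow> real \<Rightarrow> real^3" where
  "osculating_normal \<gamma> u = cross3 (unit_tangent \<gamma> u) (unit_normal \<gamma> u)"

definition Gamma1 :: "(real \<Rightarrow> real^3) \<Rightarrow> bool" where
  "Gamma1 \<gamma> \<longleftrightarrow> (\<forall>n c. vertical_normal n \<longrightarrow> npts \<gamma> (plane n c) \<le> 2)"

definition Gamma1' :: "(real \<Rightarrow> real^3) \<Rightarrow> bool" where
  "Gamma1' \<gamma> \<longleftrightarrow> inj_on (Pxy \<circ> \<gamma>) {0..<1} \<and> strictly_convex_planar (Pxy \<circ> \<gamma>)"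

definition Gamma2 :: "(real \<Rightarrow> real^3) \<Rightarrow> real \<Rightarrow> bool" where
  "Gamma2 \<gamma> \<Delta> \<longleftrightarrow> (\<forall>n c. n \<noteq> 0 \<longrightarrow> npts \<gamma> (plane n c) \<ge> 3 \<longrightarrow> plane_slope n \<le> ereal \<Delta>)"

definition Gamma3 :: "(real \<Rightarrow> real^3) \<Rightarrow> real \<Rightarrow> bool" where
  "Gamma3 \<gamma> \<Delta> \<longleftrightarrow> (\<forall>u v. \<gamma> u \<noteq> \<gamma> v \<longrightarrow> line_slope (\<gamma> u - \<gamma> v) \<le> ereal \<Delta>)"

definition Gamma4 :: "(real \<Rightarrow> real^3) \<Rightarrow> real \<Rightarrow> bool" where
  "Gamma4 \<gamma> \<Delta> \<longleftrightarrow> (\<forall>u. line_slope (vector_derivative \<gamma> (at u)) \<le> ereal \<Delta>)"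

definition Gamma4' :: "(real \<Rightarrow> real^3) \<Rightarrow> bool" where
  "Gamma4' \<gamma> \<longleftrightarrow> (\<forall>u. line_slope (vector_derivative \<gamma> (at u)) \<noteq> \<infinity>)"

definition Gamma5 :: "(real \<Rightarrow> real^3) \<Rightarrow> real \<Rightarrow> bool" where
  "Gamma5 \<gamma> \<Delta> \<longleftrightarrow> (\<forall>u. curvature \<gamma> u > 0) \<and>
     (\<forall>u. plane_slope (osculating_normal \<gamma> u) \<le> ereal \<Delta>)"

end

theory Submission
  imports Defs
begin

text \<open>
  Vertical planes are the
  preimages under Pxy of lines, whence \<Gamma>1 \<longleftrightarrow> \<Gamma>1'. A tangent has finite slope iff its
  horizontal part is non-zero, and then compactness of the circle bounds the slope. Secants
  lie in planes through three curve points and tangents are limits of secants, whence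
  \<Gamma>2 \<Longrightarrow> \<Gamma>3 \<Longrightarrow> \<Gamma>4.

  For the converses, the secant through \<gamma>(s) and \<gamma>(s + h) has as direction the divided
  difference [s, s + h], which extends continuously to h = 0 by the tangent; the plane
  through \<gamma>(a), \<gamma>(b), \<gamma>(c) has the normal [a, b] \<times> [a, b, c] (first and second divided
  differences), which extends continuously to coinciding points by tangent-chord planes and
  osculating planes. On a compact parameter domain the slopes of these lines and planes are
  bounded as long as none of them is vertical. Vertical secants and vertical planes through
  three distinct points are excluded by \<Gamma>1, vertical osculating planes by \<Gamma>5, and a
  vertical tangent-chord plane, slightly tilted, would still meet the curve three times by
  the intermediate value theorem.
\<close>

section \<open>Horizontal projection and slopes\<close>

definition hnorm :: "real^3 \<Rightarrow> real" where
  "hnorm v = sqrt ((v$1)^2 + (v$2)^2)"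

lemma hnorm_nonneg: "hnorm v \<ge> 0"
  by (simp add: hnorm_def)

lemma hnorm_eq_0_iff: "hnorm v = 0 \<longleftrightarrow> v$1 = 0 \<and> v$2 = 0"
  by (simp add: hnorm_def add_nonneg_eq_0_iff)

lemma hnorm_pos_iff: "hnorm v > 0 \<longleftrightarrow> hnorm v \<noteq> 0"
  using hnorm_nonneg[of v] by linarith

lemma hnorm_scaleR: "hnorm (c *\<^sub>R v) = \<bar>c\<bar> * hnorm v"
proof -
  have "(c * v$1)^2 + (c * v$2)^2 = c^2 * ((v$1)^2 + (v$2)^2)"
    by (simp add: power2_eq_square algebra_simps)
  then show ?thesis by (simp add: hnorm_def real_sqrt_mult)
qed

lemma inner_vec3: "(v::real^3) \<bullet> w = v$1 * w$1 + v$2 * w$2 + v$3 * w$3"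
  by (simp add: inner_vec_def sum_3)

lemma vec3_eq_0_iff: "(v::real^3) = 0 \<longleftrightarrow> hnorm v = 0 \<and> v$3 = 0"
  by (auto simp: hnorm_eq_0_iff vec_eq_iff forall_3)

lemma Pxy_eq_iff: "Pxy p = Pxy q \<longleftrightarrow> hnorm (p - q) = 0"
  by (simp add: Pxy_def hnorm_eq_0_iff vec_eq_iff forall_2)

lemma Pxy_eq_0_iff: "Pxy n = 0 \<longleftrightarrow> n$1 = 0 \<and> n$2 = 0"
  by (simp add: Pxy_def vec_eq_iff forall_2)

lemma npts_vertical_plane:
  assumes "n$3 = 0"
  shows "npts \<gamma> (plane n c) = npts (Pxy \<circ> \<gamma>) {q. Pxy n \<bullet> q = c}"
proof -
  have "hits \<gamma> (plane n c) = hits (Pxy \<circ> \<gamma>) {q. Pxy n \<bullet> q = c}"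
    using assms by (simp add: hits_def plane_def Pxy_def inner_vec3 inner_vec_def sum_2)
  then show ?thesis by (simp add: npts_def)
qed

lemma line_slope_le_iff:
  "line_slope v \<le> ereal \<Delta> \<longleftrightarrow> hnorm v \<noteq> 0 \<and> \<bar>v$3\<bar> \<le> \<Delta> * hnorm v"
proof (cases "hnorm v = 0")
  case False
  then have "hnorm v > 0" by (simp add: hnorm_pos_iff)
  then show ?thesis
    by (auto simp: line_slope_def hnorm_def[symmetric] hnorm_eq_0_iff pos_divide_le_eq)
qed (simp add: line_slope_def hnorm_eq_0_iff)

lemma plane_slope_le_iff:
  "plane_slope n \<le> ereal \<Delta> \<longleftrightarrow> n$3 \<noteq> 0 \<and> hnorm n \<le> \<Delta> * \<bar>n$3\<bar>"
  by (simp add: plane_slope_def hnorm_def[symmetric] pos_divide_le_eq)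

lemma line_slope_uminus [simp]: "line_slope (- v) = line_slope v"
  by (simp add: line_slope_def)

lemma line_slope_hnorm:
  "line_slope v = (if hnorm v = 0 then \<infinity> else ereal (\<bar>v$3\<bar> / hnorm v))"
  unfolding line_slope_def hnorm_eq_0_iff by (simp add: hnorm_def)

lemma line_slope_scaleR: "c \<noteq> 0 \<Longrightarrow> line_slope (c *\<^sub>R v) = line_slope v"
  by (simp add: line_slope_hnorm hnorm_scaleR abs_mult)

lemma plane_slope_scaleR: "c \<noteq> 0 \<Longrightarrow> plane_slope (c *\<^sub>R n) = plane_slope n"
  unfolding plane_slope_def hnorm_def[symmetric] by (simp add: hnorm_scaleR abs_mult)

lemma line_slope_le_of_orthogonal:
  assumes "n \<bullet> d = 0" "d \<noteq> 0" "plane_slope n \<le> ereal \<Delta>"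
  shows "line_slope d \<le> ereal \<Delta>"
proof -
  from assms(3) have n3: "n$3 \<noteq> 0" and n_le: "hnorm n \<le> \<Delta> * \<bar>n$3\<bar>"
    by (simp_all add: plane_slope_le_iff)
  have "d$3 * n$3 = - (n$1 * d$1 + n$2 * d$2)"
    using assms(1) by (simp add: inner_vec3 algebra_simps)
  then have "\<bar>d$3\<bar> * \<bar>n$3\<bar> \<le> hnorm n * hnorm d"
    using Cauchy_Schwarz_ineq2[of "(n$1, n$2)" "(d$1, d$2)"]
    by (simp add: hnorm_def norm_Pair abs_mult[symmetric])
  also have "\<dots> \<le> (\<Delta> * hnorm d) * \<bar>n$3\<bar>"
    using mult_right_mono[OF n_le hnorm_nonneg[of d]] by (simp add: algebra_simps)
  finally have le: "\<bar>d$3\<bar> \<le> \<Delta> * hnorm d" using n3 by simp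
  moreover have "hnorm d \<noteq> 0" using le assms(2) vec3_eq_0_iff[of d] by auto
  ultimately show ?thesis by (simp add: line_slope_le_iff)
qed

lemma orthogonal_to_two_vectors_exists:
  fixes p q :: "real^3"
  obtains n where "n \<noteq> 0" "n \<bullet> p = 0" "n \<bullet> q = 0"
proof -
  have "dim {p, q} \<le> card {p, q}" by (rule dim_le_card') simp
  also have "\<dots> < DIM(real^3)" by (cases "p = q") auto
  finally obtain n where "n \<noteq> 0" "\<And>y. y \<in> span {p, q} \<Longrightarrow> orthogonal n y"
    using orthogonal_to_subspace_exists by blast
  then show ?thesis using that span_base by (metis insertCI orthogonal_def)
qed

text \<open>A plane containing p and q has a normal parallel to p \<times> q.\<close>

lemma plane_slope_le_of_orthogonal_cross:
  assumes "n \<bullet> p = 0" "n \<bullet> q = 0" "n \<noteq> 0" "plane_slope (cross3 p q) \<le> ereal \<Delta>"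
  shows "plane_slope n \<le> ereal \<Delta>"
proof -
  define m where "m = cross3 p q"
  have m3: "m$3 \<noteq> 0" using assms(4) by (simp add: m_def plane_slope_le_iff)
  have "cross3 n m = (n \<bullet> q) *\<^sub>R p - (n \<bullet> p) *\<^sub>R q" unfolding m_def by (rule Lagrange)
  then have "cross3 n m = 0" using assms(1,2) by simp
  then have "n$2 * m$3 = m$2 * n$3" "n$3 * m$1 = m$3 * n$1"
    using cross_components(1,2)[of n m] by (simp_all add: vec_eq_iff)
  then have "n = (n$3 / m$3) *\<^sub>R m"
    using m3 by (auto simp: vec_eq_iff forall_3 field_simps)
  moreover have "n$3 \<noteq> 0" using \<open>n = _\<close> assms(3) by (metis divide_eq_0_iff scale_zero_left)
  ultimately have "plane_slope n = plane_slope m"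
    using m3 by (metis divide_eq_0_iff plane_slope_scaleR)
  then show ?thesis using assms(4) by (simp add: m_def)
qed

section \<open>Points on the circle and compact parameter domains\<close>

lemma npts_ge_3I:
  assumes "a \<in> hits g P" "b \<in> hits g P" "c \<in> hits g P" "a \<noteq> b" "a \<noteq> c" "b \<noteq> c"
  shows "npts g P \<ge> 3"
proof (cases "finite (hits g P)")
  case True
  have "card {a, b, c} \<le> card (hits g P)" using assms True by (intro card_mono) auto
  moreover have "card {a, b, c} = 3" using assms by auto
  ultimately show ?thesis using True by (simp add: npts_def numeral_eq_enat)
qed (simp add: npts_def)

lemma npts_ge_3E:
  assumes "npts g P \<ge> 3"
  obtains a b c where "a \<in> hits g P" "b \<in> hits g P" "c \<in> hits g P" "a \<noteq> b" "b \<noteq> c" "a \<noteq> c"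
proof -
  obtain T where T: "T \<subseteq> hits g P" "card T = 3"
  proof (cases "finite (hits g P)")
    case True
    then have "3 \<le> card (hits g P)" using assms by (simp add: npts_def numeral_eq_enat)
    then show ?thesis using that obtain_subset_with_card_n by metis
  qed (use that infinite_arbitrarily_large in metis)
  then show ?thesis using that unfolding card_3_iff by blast
qed

lemma not_Ints_abs_lt_1: "0 < \<bar>r\<bar> \<Longrightarrow> \<bar>r\<bar> < 1 \<Longrightarrow> (r::real) \<notin> \<int>"
  by (auto elim!: Ints_cases)

lemma frac_eq_imp_diff_Ints: "frac x = frac y \<Longrightarrow> x - y \<in> (\<int>::real set)"
proof -
  assume "frac x = frac y"
  then have "x - y = of_int (\<lfloor>x\<rfloor> - \<lfloor>y\<rfloor>)" by (simp add: frac_def algebra_simps)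
  then show ?thesis by simp
qed

lemma periodic_of_int:
  fixes f :: "real \<Rightarrow> 'a"
  assumes "\<And>t. f (t + 1) = f t"
  shows "f (t + of_int k) = f (t::real)"
proof (induction k rule: int_induct[where k = 0])
  case (step1 i) then show ?case using assms[of "t + of_int i"] by (simp add: add.assoc)
next
  case (step2 i) then show ?case using assms[of "t + of_int (i - 1)"] by (simp add: add.assoc)
qed simp

lemma periodic_Ints: "(\<And>t::real. f (t + 1) = f t) \<Longrightarrow> d \<in> \<int> \<Longrightarrow> f (t + d) = f (t::real)"
  by (metis Ints_cases periodic_of_int)

lemma periodic_frac: "(\<And>t::real. f (t + 1) = f t) \<Longrightarrow> f (frac t) = f t"
  using periodic_of_int[of f "frac t" "\<lfloor>t\<rfloor>"] by (simp add: frac_def)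

lemma continuous_ratio_bounded:
  fixes f g :: "'a::topological_space \<Rightarrow> real"
  assumes "compact K" "continuous_on K f" "continuous_on K g" "\<And>x. x \<in> K \<Longrightarrow> g x \<noteq> 0"
  obtains D where "D \<ge> 0" "\<And>x. x \<in> K \<Longrightarrow> \<bar>f x\<bar> \<le> D * \<bar>g x\<bar>"
proof -
  have "continuous_on K (\<lambda>x. \<bar>f x\<bar> / \<bar>g x\<bar>)"
    using assms(2-4) by (intro continuous_intros) auto
  then have "bounded ((\<lambda>x. \<bar>f x\<bar> / \<bar>g x\<bar>) ` K)"
    using assms(1) by (intro compact_imp_bounded compact_continuous_image)
  then obtain M where "\<And>x. x \<in> K \<Longrightarrow> \<bar>f x\<bar> / \<bar>g x\<bar> \<le> M"
    unfolding bounded_real by fastforce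
  then show ?thesis
    using assms(4) by (intro that[of "max M 0"])
      (auto simp: divide_le_eq max_mult_distrib_right intro: le_max_iff_disj[THEN iffD2])
qed

lemma three_distinct_sorted:
  fixes x y z :: real
  assumes "x \<noteq> y" "y \<noteq> z" "x \<noteq> z"
  obtains a b c where "a < b" "b < c" "{a, b, c} = {x, y, z}"
proof -
  have "(x < y \<and> y < z) \<or> (x < z \<and> z < y) \<or> (y < x \<and> x < z) \<or> (y < z \<and> z < x) \<or>
      (z < x \<and> x < y) \<or> (z < y \<and> y < x)"
    using assms by argo
  then show ?thesis using that by (elim disjE conjE) (auto simp: insert_commute)
qed

definition triple_domain :: "(real \<times> real \<times> real) set" where
  "triple_domain = {0..1} \<times> {0..2/3} \<times> {0..1}"

text \<open>
  A point (a, L, \<theta>) of triple_domain encodes the parameters a \<le> a + \<theta> L \<le> a + L of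
  three curve points; L = 0, \<theta> = 0 or \<theta> = 1 make some of them coincide.
\<close>

definition left_param :: "real \<times> real \<times> real \<Rightarrow> real" where
  "left_param q = fst q"

definition mid_param :: "real \<times> real \<times> real \<Rightarrow> real" where
  "mid_param q = fst q + snd (snd q) * fst (snd q)"

definition right_param :: "real \<times> real \<times> real \<Rightarrow> real" where
  "right_param q = fst q + fst (snd q)"

lemma continuous_params:
  "continuous (at q) left_param" "continuous (at q) mid_param" "continuous (at q) right_param"
  unfolding left_param_def[abs_def] mid_param_def[abs_def] right_param_def[abs_def]
  by (auto intro!: continuous_intros)

lemma triple_domain_iff:
  "(a, L, \<theta>) \<in> triple_domain \<longleftrightarrow> 0 \<le> a \<and> a \<le> 1 \<and> 0 \<le> L \<and> L \<le> 2/3 \<and> 0 \<le> \<theta> \<and> \<theta> \<le> 1"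
  by (auto simp: triple_domain_def)

lemma params_simps [simp]:
  "left_param (a, L, \<theta>) = a" "mid_param (a, L, \<theta>) = a + \<theta> * L" "right_param (a, L, \<theta>) = a + L"
  by (simp_all add: left_param_def mid_param_def right_param_def)

locale smooth_closed_curve =
  fixes \<gamma> :: "real \<Rightarrow> real^3"
  assumes smooth_immersed: "smooth_immersed_closed_curve \<gamma>"
begin

definition \<gamma>' :: "real \<Rightarrow> real^3" where "\<gamma>' t = vector_derivative \<gamma> (at t)"
definition \<gamma>'' :: "real \<Rightarrow> real^3" where "\<gamma>'' t = vector_derivative \<gamma>' (at t)"

lemma periodic: "\<gamma> (t + 1) = \<gamma> t"
  using smooth_immersed by (simp add: smooth_immersed_closed_curve_def)

lemma velocity_nonzero: "\<gamma>' t \<noteq> 0"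
  using smooth_immersed by (simp add: smooth_immersed_closed_curve_def \<gamma>'_def)

lemma vderiv_iter_differentiable: "vderiv_iter n \<gamma> differentiable (at t)"
  using smooth_immersed by (simp add: smooth_immersed_closed_curve_def smooth_map_def)

lemma curve_has_vector_derivative: "(\<gamma> has_vector_derivative \<gamma>' t) (at t)"
  using vderiv_iter_differentiable[of 0] by (simp add: \<gamma>'_def vector_derivative_works)

lemma velocity_has_vector_derivative: "(\<gamma>' has_vector_derivative \<gamma>'' t) (at t)"
  using vderiv_iter_differentiable[of 1]
  by (simp add: \<gamma>'_def[abs_def] \<gamma>''_def vector_derivative_works)

lemma acceleration_differentiable: "\<gamma>'' differentiable (at t)"
  using vderiv_iter_differentiable[of 2]
  by (simp add: \<gamma>'_def[abs_def] \<gamma>''_def[abs_def] numeral_2_eq_2)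

lemma isCont_curve: "isCont \<gamma> t"
  using curve_has_vector_derivative by (rule has_vector_derivative_continuous)

lemma isCont_velocity: "isCont \<gamma>' t"
  using velocity_has_vector_derivative by (rule has_vector_derivative_continuous)

lemma isCont_acceleration: "isCont \<gamma>'' t"
  using acceleration_differentiable by (rule differentiable_imp_continuous_within)

lemma continuous_on_velocity: "continuous_on S \<gamma>'"
  by (simp add: continuous_at_imp_continuous_on isCont_velocity)

lemma velocity_periodic: "\<gamma>' (t + 1) = \<gamma>' t"
proof -
  have "((\<gamma> \<circ> (\<lambda>x. x + 1)) has_vector_derivative (1 *\<^sub>R \<gamma>' (t + 1))) (at t)"
    by (rule vector_diff_chain_at curve_has_vector_derivative derivative_eq_intros refl | simp)+
  moreover have "\<gamma> \<circ> (\<lambda>x. x + 1) = \<gamma>" by (auto simp: periodic)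
  ultimately have "(\<gamma> has_vector_derivative \<gamma>' (t + 1)) (at t)" by simp
  from vector_derivative_unique_at[OF curve_has_vector_derivative this] show ?thesis by simp
qed

lemma curve_frac: "\<gamma> (frac t) = \<gamma> t"
  by (rule periodic_frac) (rule periodic)

lemma curve_Ints: "d \<in> \<int> \<Longrightarrow> \<gamma> (t + d) = \<gamma> t"
  by (rule periodic_Ints) (rule periodic)

lemma hits_plane_frac: "n \<bullet> \<gamma> x = c \<Longrightarrow> frac x \<in> hits \<gamma> (plane n c)"
  by (simp add: hits_def plane_def curve_frac frac_lt_1)

section \<open>Vertical planes\<close>

lemma Gamma1_no_three_points:
  assumes "Gamma1 \<gamma>" "n$3 = 0" "n \<noteq> 0"
    and "n \<bullet> \<gamma> x = c" "n \<bullet> \<gamma> y = c" "n \<bullet> \<gamma> z = c"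
    and "x - y \<notin> \<int>" "x - z \<notin> \<int>" "y - z \<notin> \<int>"
  shows False
proof -
  have "frac x \<noteq> frac y" "frac x \<noteq> frac z" "frac y \<noteq> frac z"
    using assms(7-9) frac_eq_imp_diff_Ints by blast+
  then have "npts \<gamma> (plane n c) \<ge> 3"
    using hits_plane_frac assms(4-6) by (intro npts_ge_3I)
  moreover have "npts \<gamma> (plane n c) \<le> 2"
    using assms(1-3) by (simp add: Gamma1_def vertical_normal_def)
  ultimately have "(3::enat) \<le> 2" by (rule order.trans)
  then show False by simp
qed

lemma Gamma1_no_three_points_ordered:
  assumes "Gamma1 \<gamma>" "n$3 = 0" "n \<noteq> 0"
    and "n \<bullet> \<gamma> y = n \<bullet> \<gamma> x" "n \<bullet> \<gamma> z = n \<bullet> \<gamma> x"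
    and "x < y" "y < z" "z - x < 1"
  shows False
  using assms by (intro Gamma1_no_three_points[of n x "n \<bullet> \<gamma> x" y z] not_Ints_abs_lt_1) auto

lemma Gamma1_hnorm_chord_nonzero:
  assumes G1: "Gamma1 \<gamma>" and xy: "x - y \<notin> \<int>"
  shows "hnorm (\<gamma> x - \<gamma> y) \<noteq> 0"
proof
  assume eq: "hnorm (\<gamma> x - \<gamma> y) = 0"
  obtain w where w: "w - x \<notin> \<int>" "y - w \<notin> \<int>"
  proof (cases "y - (x + 1/3) \<in> \<int>")
    case True
    have "y - (x + 2/3) \<notin> \<int>"
    proof
      assume "y - (x + 2/3) \<in> \<int>"
      with True have "(y - (x + 1/3)) - (y - (x + 2/3)) \<in> \<int>" by (rule Ints_diff)
      then show False using not_Ints_abs_lt_1[of "1/3"] by simp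
    qed
    then show ?thesis using that[of "x + 2/3"] not_Ints_abs_lt_1[of "2/3"] by simp
  next
    case False
    then show ?thesis using that[of "x + 1/3"] not_Ints_abs_lt_1[of "1/3"] by simp
  qed
  define d where "d = \<gamma> w - \<gamma> x"
  define n :: "real^3" where
    "n = (if d$1 = 0 \<and> d$2 = 0 then vector [1, 0, 0] else vector [- d$2, d$1, 0])"
  have n: "n$3 = 0" "n \<noteq> 0" by (auto simp: n_def vec_eq_iff forall_3)
  have "n \<bullet> \<gamma> y = n \<bullet> \<gamma> x" using eq n(1) by (simp add: inner_vec3 hnorm_eq_0_iff)
  moreover have "n \<bullet> d = 0" by (auto simp: n_def inner_vec3)
  then have "n \<bullet> \<gamma> w = n \<bullet> \<gamma> x" by (simp add: d_def inner_diff_right)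
  moreover have "x - w \<notin> \<int>" using w(1) by (metis Ints_minus minus_diff_eq)
  ultimately show False
    using Gamma1_no_three_points[OF G1 n, of x "n \<bullet> \<gamma> x" y w] xy w(2) by auto
qed

lemma Gamma1_iff_Gamma1': "Gamma1 \<gamma> \<longleftrightarrow> Gamma1' \<gamma>"
proof
  assume G1: "Gamma1 \<gamma>"
  have "inj_on (Pxy \<circ> \<gamma>) {0..<1}"
  proof (rule inj_onI, rule ccontr)
    fix u v assume "u \<in> {0..<1}" "v \<in> {0..<1}" "(Pxy \<circ> \<gamma>) u = (Pxy \<circ> \<gamma>) v" "u \<noteq> v"
    then show False
      using Gamma1_hnorm_chord_nonzero[OF G1, of u v] not_Ints_abs_lt_1[of "u - v"]
      by (auto simp: Pxy_eq_iff)
  qed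
  moreover have "strictly_convex_planar (Pxy \<circ> \<gamma>)"
    unfolding strictly_convex_planar_def
  proof (intro allI impI)
    fix a :: "real^2" and c assume "a \<noteq> 0"
    define n :: "real^3" where "n = vector [a$1, a$2, 0]"
    have "Pxy n = a" by (simp add: n_def Pxy_def vec_eq_iff forall_2)
    moreover have "vertical_normal n"
      using \<open>a \<noteq> 0\<close> by (auto simp: n_def vertical_normal_def vec_eq_iff forall_2 forall_3)
    moreover from this have "npts \<gamma> (plane n c) \<le> 2" using G1 by (simp add: Gamma1_def)
    ultimately show "npts (Pxy \<circ> \<gamma>) {q. a \<bullet> q = c} \<le> 2"
      by (simp add: npts_vertical_plane vertical_normal_def)
  qed
  ultimately show "Gamma1' \<gamma>" by (simp add: Gamma1'_def)
next
  assume G1': "Gamma1' \<gamma>"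
  show "Gamma1 \<gamma>" unfolding Gamma1_def
  proof (intro allI impI)
    fix n c assume "vertical_normal n"
    then have "n$3 = 0" "Pxy n \<noteq> 0"
      unfolding vertical_normal_def Pxy_eq_0_iff by (auto simp: vec_eq_iff forall_3)
    then show "npts \<gamma> (plane n c) \<le> 2"
      using G1' by (simp add: Gamma1'_def strictly_convex_planar_def npts_vertical_plane)
  qed
qed

section \<open>Divided differences\<close>

definition divided_diff :: "real \<Rightarrow> real \<Rightarrow> real^3" where
  "divided_diff s t = (if s = t then \<gamma>' s else (1 / (t - s)) *\<^sub>R (\<gamma> t - \<gamma> s))"

lemma divided_diff_commute: "divided_diff s t = divided_diff t s"
proof (cases "s = t")
  case False
  have "(1 / (t - s)) *\<^sub>R (\<gamma> t - \<gamma> s) = (1 / (s - t)) *\<^sub>R (\<gamma> s - \<gamma> t)"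
  proof -
    have "1 / (s - t) = - (1 / (t - s))" by (simp add: minus_divide_right)
    then have "(1 / (s - t)) *\<^sub>R (\<gamma> s - \<gamma> t) = (1 / (t - s)) *\<^sub>R (- (\<gamma> s - \<gamma> t))"
      by (simp only: scaleR_minus_left scaleR_minus_right)
    then show ?thesis by simp
  qed
  then show ?thesis using False by (simp add: divided_diff_def)
qed (simp add: divided_diff_def)

lemma chord_eq_scaleR_divided_diff: "\<gamma> (s + h) - \<gamma> s = h *\<^sub>R divided_diff s (s + h)"
  by (cases "h = 0") (simp_all add: divided_diff_def)

lemma divided_diff_near_diagonal:
  assumes "e > 0"
  obtains \<delta> where "\<delta> > 0"
    "\<And>a b. \<bar>a - s0\<bar> < \<delta> \<Longrightarrow> \<bar>b - s0\<bar> < \<delta> \<Longrightarrow> norm (divided_diff a b - \<gamma>' s0) \<le> e"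
proof -
  obtain \<delta> where \<delta>: "\<delta> > 0" "\<And>x. dist x s0 < \<delta> \<Longrightarrow> dist (\<gamma>' x) (\<gamma>' s0) < e"
    using isCont_velocity[of s0] assms unfolding continuous_at_eps_delta by blast
  have "norm (divided_diff a b - \<gamma>' s0) \<le> e" if a: "\<bar>a - s0\<bar> < \<delta>" and b: "\<bar>b - s0\<bar> < \<delta>" for a b
  proof (cases "a = b")
    case True then show ?thesis using \<delta>(2)[of a] a by (simp add: divided_diff_def dist_norm)
  next
    case False
    have "norm (\<gamma> b - \<gamma> a - (b - a) *\<^sub>R \<gamma>' s0) \<le> norm (b - a) * e"
    proof (rule vector_differentiable_bound_linearization[where S = "ball s0 \<delta>"])
      show "\<And>x. x \<in> ball s0 \<delta> \<Longrightarrow> (\<gamma> has_vector_derivative \<gamma>' x) (at x within ball s0 \<delta>)"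
        using curve_has_vector_derivative has_vector_derivative_at_within by blast
      show "closed_segment a b \<subseteq> ball s0 \<delta>"
        using a b by (intro closed_segment_subset) (auto simp: dist_real_def)
      show "\<And>x. x \<in> ball s0 \<delta> \<Longrightarrow> norm (\<gamma>' x - \<gamma>' s0) \<le> e"
        using \<delta>(2) by (auto simp: dist_norm dist_commute less_imp_le)
    qed (use \<delta> in simp)
    moreover have "divided_diff a b - \<gamma>' s0 = (1 / (b - a)) *\<^sub>R (\<gamma> b - \<gamma> a - (b - a) *\<^sub>R \<gamma>' s0)"
      using False by (simp add: divided_diff_def scaleR_diff_right)
    ultimately show ?thesis using False by (simp add: divide_le_eq mult.commute)
  qed
  then show ?thesis using \<delta>(1) that by blast
qed

lemma continuous_divided_diff: "continuous (at p) (\<lambda>p. divided_diff (fst p) (snd p))"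
proof (cases "fst p = snd p")
  case True
  show ?thesis unfolding continuous_at_eps_delta
  proof (intro allI impI)
    fix e :: real assume "e > 0"
    then obtain \<delta> where \<delta>: "\<delta> > 0"
      "\<And>a b. \<bar>a - fst p\<bar> < \<delta> \<Longrightarrow> \<bar>b - fst p\<bar> < \<delta> \<Longrightarrow> norm (divided_diff a b - \<gamma>' (fst p)) \<le> e/2"
      using divided_diff_near_diagonal[of "e/2" "fst p"] by (metis half_gt_zero)
    have "dist (divided_diff (fst x) (snd x)) (divided_diff (fst p) (snd p)) < e"
      if "dist x p < \<delta>" for x
    proof -
      have "\<bar>fst x - fst p\<bar> < \<delta>" "\<bar>snd x - fst p\<bar> < \<delta>"
        using that dist_fst_le[of x p] dist_snd_le[of x p] True by (simp_all add: dist_real_def)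
      then show ?thesis using \<delta>(2) True \<open>e > 0\<close> by (fastforce simp: divided_diff_def dist_norm)
    qed
    then show "\<exists>d>0. \<forall>x. dist x p < d \<longrightarrow>
        dist (divided_diff (fst x) (snd x)) (divided_diff (fst p) (snd p)) < e"
      using \<delta>(1) by blast
  qed
next
  case False
  define f where "f q = (1 / (snd q - fst q)) *\<^sub>R (\<gamma> (snd q) - \<gamma> (fst q))" for q :: "real \<times> real"
  have "continuous (at p) f"
    unfolding f_def using False
    by (intro continuous_intros continuous_at_compose[OF _ isCont_curve, unfolded o_def]) auto
  moreover have "f x = divided_diff (fst x) (snd x)" if "dist x p < \<bar>snd p - fst p\<bar> / 2" for x
  proof -
    have "\<bar>fst x - fst p\<bar> < \<bar>snd p - fst p\<bar> / 2" "\<bar>snd x - snd p\<bar> < \<bar>snd p - fst p\<bar> / 2"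
      using that dist_fst_le[of x p] dist_snd_le[of x p] by (simp_all add: dist_real_def)
    then have "fst x \<noteq> snd x" by (auto simp: abs_if split: if_splits)
    then show ?thesis by (simp add: f_def divided_diff_def)
  qed
  ultimately show ?thesis
    using False continuous_transform_within[of p UNIV f "\<bar>snd p - fst p\<bar> / 2"] by auto
qed

lemma continuous_divided_diff_comp:
  assumes "continuous (at x) u" "continuous (at x) v"
  shows "continuous (at x) (\<lambda>x. divided_diff (u x) (v x))"
  using continuous_at_compose[OF continuous_Pair[OF assms] continuous_divided_diff]
  by (simp add: o_def)

lemma divided_diff_tendsto_velocity: "((\<lambda>t. divided_diff s t) \<longlongrightarrow> \<gamma>' s) (at s)"
proof -
  have "isCont (\<lambda>t. divided_diff s t) s"
    by (intro continuous_divided_diff_comp continuous_intros)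
  then show ?thesis by (simp add: isCont_def divided_diff_def)
qed

section \<open>Secants and tangents\<close>

lemma Gamma2_imp_Gamma3:
  assumes G2: "Gamma2 \<gamma> \<Delta>"
  shows "Gamma3 \<gamma> \<Delta>"
  unfolding Gamma3_def
proof (intro allI impI)
  fix u v assume ne: "\<gamma> u \<noteq> \<gamma> v"
  have uv: "frac u \<noteq> frac v"
    using ne curve_Ints[OF frac_eq_imp_diff_Ints, of u v v] by auto
  have "\<exists>w::real. (w = 0 \<or> w = 1/3 \<or> w = 2/3) \<and> w \<noteq> a \<and> w \<noteq> b" for a b
  proof -
    consider "a \<noteq> 0" "b \<noteq> 0" | "a \<noteq> 1/3" "b \<noteq> 1/3" | "a \<noteq> 2/3" "b \<noteq> 2/3"
      by fastforce
    then show ?thesis by cases blast+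
  qed
  then obtain w :: real where w: "w = 0 \<or> w = 1/3 \<or> w = 2/3" "w \<noteq> frac u" "w \<noteq> frac v"
    by blast
  obtain n where n: "n \<noteq> 0" "n \<bullet> (\<gamma> u - \<gamma> v) = 0" "n \<bullet> (\<gamma> w - \<gamma> v) = 0"
    by (rule orthogonal_to_two_vectors_exists)
  then have "n \<bullet> \<gamma> u = n \<bullet> \<gamma> v" "n \<bullet> \<gamma> w = n \<bullet> \<gamma> v" by (simp_all add: inner_diff_right)
  then have "frac u \<in> hits \<gamma> (plane n (n \<bullet> \<gamma> v))" "frac v \<in> hits \<gamma> (plane n (n \<bullet> \<gamma> v))"
      "w \<in> hits \<gamma> (plane n (n \<bullet> \<gamma> v))"
    using w(1) by (simp_all add: hits_plane_frac) (auto simp: hits_def plane_def)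
  then have "npts \<gamma> (plane n (n \<bullet> \<gamma> v)) \<ge> 3"
    by (rule npts_ge_3I) (use uv w in auto)
  then have "plane_slope n \<le> ereal \<Delta>" using G2 n(1) unfolding Gamma2_def by blast
  then show "line_slope (\<gamma> u - \<gamma> v) \<le> ereal \<Delta>"
    using n(2) ne by (intro line_slope_le_of_orthogonal) auto
qed

lemma Gamma3_imp_Gamma4:
  assumes G3: "Gamma3 \<gamma> \<Delta>"
  shows "Gamma4 \<gamma> \<Delta>"
  unfolding Gamma4_def \<gamma>'_def[symmetric]
proof
  fix s
  define C where "C = {v :: real^3. \<bar>v$3\<bar> \<le> \<Delta> * hnorm v}"
  have "closed C"
    unfolding C_def hnorm_def by (intro closed_Collect_le continuous_intros)
  moreover have "divided_diff s t \<in> C" if "t \<noteq> s" for t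
  proof (cases "\<gamma> t = \<gamma> s")
    case False
    then have "\<bar>(\<gamma> t - \<gamma> s)$3\<bar> \<le> \<Delta> * hnorm (\<gamma> t - \<gamma> s)"
      using G3 by (simp add: Gamma3_def line_slope_le_iff)
    then have "\<bar>1 / (t - s)\<bar> * \<bar>(\<gamma> t - \<gamma> s)$3\<bar> \<le> \<Delta> * (\<bar>1 / (t - s)\<bar> * hnorm (\<gamma> t - \<gamma> s))"
      by (metis abs_ge_zero mult.left_commute mult_left_mono)
    then show ?thesis
      using that by (simp add: C_def divided_diff_def hnorm_scaleR abs_mult)
  qed (use that in \<open>simp add: C_def divided_diff_def hnorm_def\<close>)
  ultimately have "\<gamma>' s \<in> C"
    by (intro Lim_in_closed_set[OF _ _ _ divided_diff_tendsto_velocity])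
      (auto simp: eventually_at_filter)
  moreover have "hnorm (\<gamma>' s) \<noteq> 0"
    using calculation velocity_nonzero[of s] by (auto simp: C_def vec3_eq_0_iff)
  ultimately show "line_slope (\<gamma>' s) \<le> ereal \<Delta>" by (simp add: C_def line_slope_le_iff)
qed

lemma Gamma4'_iff_hnorm: "Gamma4' \<gamma> \<longleftrightarrow> (\<forall>t. hnorm (\<gamma>' t) \<noteq> 0)"
  by (simp add: Gamma4'_def \<gamma>'_def[symmetric] line_slope_hnorm)

lemma Gamma4_iff_Gamma4': "(\<exists>\<Delta>\<ge>0. Gamma4 \<gamma> \<Delta>) \<longleftrightarrow> Gamma4' \<gamma>"
proof
  assume "\<exists>\<Delta>\<ge>0. Gamma4 \<gamma> \<Delta>"
  then obtain \<Delta> where "\<And>u. line_slope (vector_derivative \<gamma> (at u)) \<le> ereal \<Delta>"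
    by (auto simp: Gamma4_def)
  then show "Gamma4' \<gamma>" unfolding Gamma4'_def by (metis ereal_infty_less_eq(1) PInfty_neq_ereal(1))
next
  assume "Gamma4' \<gamma>"
  then have nz: "hnorm (\<gamma>' t) \<noteq> 0" for t by (simp add: Gamma4'_iff_hnorm)
  have "continuous_on {0..1} (\<lambda>t. \<gamma>' t $ 3)" "continuous_on {0..1} (\<lambda>t. hnorm (\<gamma>' t))"
    unfolding hnorm_def by (auto intro!: continuous_intros continuous_on_velocity)
  then obtain D where "D \<ge> 0" and D: "\<And>t. t \<in> {0..1} \<Longrightarrow> \<bar>\<gamma>' t $ 3\<bar> \<le> D * \<bar>hnorm (\<gamma>' t)\<bar>"
    by (rule continuous_ratio_bounded[OF compact_Icc]) (use nz in auto)
  have "\<bar>\<gamma>' t $ 3\<bar> \<le> D * hnorm (\<gamma>' t)" for t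
    using D[of "frac t"] periodic_frac[of \<gamma>', OF velocity_periodic] frac_lt_1[of t]
    by (simp add: hnorm_nonneg)
  then have "Gamma4 \<gamma> D"
    using nz by (simp add: Gamma4_def \<gamma>'_def[symmetric] line_slope_le_iff)
  then show "\<exists>\<Delta>\<ge>0. Gamma4 \<gamma> \<Delta>" using \<open>D \<ge> 0\<close> by blast
qed

lemma chord_as_short_chord:
  assumes "\<gamma> u \<noteq> \<gamma> v"
  obtains s h where "0 \<le> s" "s \<le> 1" "0 < h" "h \<le> 1/2"
    "\<gamma> u - \<gamma> v = \<gamma> (s + h) - \<gamma> s \<or> \<gamma> v - \<gamma> u = \<gamma> (s + h) - \<gamma> s"
proof -
  have short: "\<exists>s h. 0 \<le> s \<and> s \<le> 1 \<and> 0 < h \<and> h \<le> 1/2 \<and>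
      (\<gamma> y - \<gamma> x = \<gamma> (s + h) - \<gamma> s \<or> \<gamma> x - \<gamma> y = \<gamma> (s + h) - \<gamma> s)"
    if "0 \<le> x" "x < y" "y < 1" for x y
  proof (cases "y - x \<le> 1/2")
    case True
    then show ?thesis using that by (intro exI[of _ x] exI[of _ "y - x"]) auto
  next
    case False
    then show ?thesis using that periodic[of x]
      by (intro exI[of _ y] exI[of _ "x + 1 - y"]) auto
  qed
  have "frac u \<noteq> frac v" using assms curve_frac by metis
  then consider "frac u < frac v" | "frac v < frac u" by linarith
  then show ?thesis
    using short[of "frac u" "frac v"] short[of "frac v" "frac u"] that
    by cases (auto simp: curve_frac frac_lt_1)
qed

lemma Gamma1_Gamma4'_imp_Gamma3:
  assumes G1: "Gamma1 \<gamma>" and G4': "Gamma4' \<gamma>"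
  obtains \<Delta> where "\<Delta> \<ge> 0" "Gamma3 \<gamma> \<Delta>"
proof -
  define K where "K = {0..1::real} \<times> {0..1/2::real}"
  define F where "F q = divided_diff (fst q) (fst q + snd q)" for q :: "real \<times> real"
  have "continuous_on K F"
    unfolding F_def
    by (intro continuous_at_imp_continuous_on ballI continuous_divided_diff_comp continuous_intros)
  then have "compact K" "continuous_on K (\<lambda>q. F q $ 3)" "continuous_on K (\<lambda>q. hnorm (F q))"
    unfolding K_def hnorm_def by (auto intro!: continuous_intros compact_Times)
  moreover have nz: "hnorm (F q) \<noteq> 0" if "q \<in> K" for q
  proof (cases "snd q = 0")
    case True
    then show ?thesis using G4' by (simp add: F_def divided_diff_def Gamma4'_iff_hnorm)
  next
    case False
    then have "0 < snd q" "snd q \<le> 1/2" using that by (auto simp: K_def)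
    then have "hnorm (\<gamma> (fst q + snd q) - \<gamma> (fst q)) \<noteq> 0"
      by (intro Gamma1_hnorm_chord_nonzero[OF G1] not_Ints_abs_lt_1) auto
    then show ?thesis by (simp add: F_def chord_eq_scaleR_divided_diff hnorm_scaleR)
  qed
  ultimately obtain D where "D \<ge> 0" and D: "\<And>q. q \<in> K \<Longrightarrow> \<bar>F q $ 3\<bar> \<le> D * \<bar>hnorm (F q)\<bar>"
    by (rule continuous_ratio_bounded) auto
  have "line_slope (\<gamma> u - \<gamma> v) \<le> ereal D" if ne: "\<gamma> u \<noteq> \<gamma> v" for u v
  proof -
    obtain s h where sh: "0 \<le> s" "s \<le> 1" "0 < h" "h \<le> 1/2"
      and "\<gamma> u - \<gamma> v = \<gamma> (s + h) - \<gamma> s \<or> \<gamma> v - \<gamma> u = \<gamma> (s + h) - \<gamma> s"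
      using chord_as_short_chord[OF ne] by blast
    then have "line_slope (\<gamma> u - \<gamma> v) = line_slope (F (s, h))"
      by (metis F_def chord_eq_scaleR_divided_diff fst_conv line_slope_scaleR line_slope_uminus
          minus_diff_eq snd_conv less_irrefl)
    moreover have "(s, h) \<in> K" using sh by (simp add: K_def)
    ultimately show ?thesis
      using D nz by (simp add: line_slope_le_iff hnorm_nonneg)
  qed
  then show ?thesis using \<open>D \<ge> 0\<close> that by (simp add: Gamma3_def)
qed

section \<open>Planes through three points\<close>

lemma Gamma1_chord_plane_not_vertical:
  assumes G1: "Gamma1 \<gamma>" and abc: "a < b" "b < c" "c - a < 1"
  shows "(cross3 (\<gamma> b - \<gamma> a) (\<gamma> c - \<gamma> b))$3 \<noteq> 0"
proof
  assume z: "(cross3 (\<gamma> b - \<gamma> a) (\<gamma> c - \<gamma> b))$3 = 0"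
  define p where "p = \<gamma> b - \<gamma> a"
  define q where "q = \<gamma> c - \<gamma> b"
  have "hnorm p \<noteq> 0"
    unfolding p_def using abc by (intro Gamma1_hnorm_chord_nonzero[OF G1] not_Ints_abs_lt_1) auto
  then have "p$1 \<noteq> 0 \<or> p$2 \<noteq> 0" by (simp add: hnorm_eq_0_iff)
  define n :: "real^3" where "n = vector [- p$2, p$1, 0]"
  have n: "n$3 = 0" "n \<noteq> 0" using \<open>p$1 \<noteq> 0 \<or> p$2 \<noteq> 0\<close> by (auto simp: n_def vec_eq_iff forall_3)
  have "n \<bullet> p = 0" by (simp add: n_def inner_vec3)
  moreover have "n \<bullet> q = 0"
    using z by (simp add: n_def inner_vec3 cross_components p_def q_def algebra_simps)
  ultimately have "n \<bullet> \<gamma> b = n \<bullet> \<gamma> a" "n \<bullet> \<gamma> c = n \<bullet> \<gamma> a"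
    by (auto simp: p_def q_def inner_diff_right)
  then show False using Gamma1_no_three_points_ordered[OF G1 n] abc by blast
qed

lemma Gamma5_osculating_not_vertical:
  assumes G5: "Gamma5 \<gamma> \<Delta>"
  shows "(cross3 (\<gamma>' t) (\<gamma>'' t))$3 \<noteq> 0"
proof
  assume z: "(cross3 (\<gamma>' t) (\<gamma>'' t))$3 = 0"
  define \<phi> where "\<phi> u = inverse (norm (\<gamma>' u))" for u
  have "((\<lambda>u. norm (\<gamma>' u)) has_real_derivative (\<gamma>'' t \<bullet> sgn (\<gamma>' t))) (at t)"
    using diff_chain_at[OF velocity_has_vector_derivative[of t, unfolded has_vector_derivative_def]
        has_derivative_norm[OF velocity_nonzero[of t]]]
    by (simp add: o_def has_field_derivative_def mult.commute[of _ "\<gamma>'' t \<bullet> sgn (\<gamma>' t)"])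
  then obtain \<phi>' where "(\<phi> has_real_derivative \<phi>') (at t)"
    using DERIV_inverse_fun velocity_nonzero unfolding \<phi>_def[abs_def] by fastforce
  then have "((\<lambda>u. \<phi> u *\<^sub>R \<gamma>' u) has_vector_derivative \<phi> t *\<^sub>R \<gamma>'' t + \<phi>' *\<^sub>R \<gamma>' t) (at t)"
    by (rule has_vector_derivative_scaleR[OF _ velocity_has_vector_derivative])
  moreover have ut: "unit_tangent \<gamma> = (\<lambda>u. \<phi> u *\<^sub>R \<gamma>' u)"
    by (auto simp: unit_tangent_def \<phi>_def \<gamma>'_def)
  ultimately have "vector_derivative (unit_tangent \<gamma>) (at t) = \<phi> t *\<^sub>R \<gamma>'' t + \<phi>' *\<^sub>R \<gamma>' t"
    by (simp add: vector_derivative_at)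
  then have "\<exists>c. osculating_normal \<gamma> t = c *\<^sub>R cross3 (\<gamma>' t) (\<gamma>'' t)"
    unfolding osculating_normal_def unit_normal_def
    by (auto simp: ut cross_add_right cross_mult_right cross_mult_left)
  then have "plane_slope (osculating_normal \<gamma> t) = \<infinity>" using z by (auto simp: plane_slope_def)
  then show False using G5 by (metis Gamma5_def PInfty_neq_ereal(1) ereal_infty_less_eq(1))
qed

lemma inner_chord_has_real_derivative:
  "((\<lambda>t. n \<bullet> (\<gamma> t - \<gamma> s)) has_real_derivative (n \<bullet> \<gamma>' t)) (at t)"
proof -
  have "((\<lambda>u. \<gamma> u - \<gamma> s) has_vector_derivative \<gamma>' t) (at t)"
    using has_vector_derivative_diff[OF curve_has_vector_derivative has_vector_derivative_const]
    by simp
  from bounded_linear.has_vector_derivative[OF bounded_linear_inner_right this, of n]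
  show ?thesis by (simp add: has_real_derivative_iff_has_vector_derivative)
qed

lemma continuous_on_inner_chord: "continuous_on S (\<lambda>t. n \<bullet> (\<gamma> t - \<gamma> s))"
  by (intro continuous_at_imp_continuous_on ballI DERIV_isCont[OF inner_chord_has_real_derivative])

text \<open>
  In the next two lemmas F(t) = n \<bullet> (\<gamma> t - \<gamma> s) vanishes at s and at some r in (s, s + 1),
  and mA, mB are points of the two arcs (s, r) and (r - 1, s). If F is positive at both, a
  small positive level of F is attained three times. If F changes sign and the vertical
  plane with normal n is tangent at s, a small horizontal tilt of n makes it transversal
  at s with the same signs at mA, mB, again producing three zeros.
\<close>

lemma Gamma1_level_not_same_sign:
  assumes G1: "Gamma1 \<gamma>" and n: "n$3 = 0" "n \<noteq> 0"
    and m: "s < mA" "mA < r" "r - 1 < mB" "mB < s"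
    and Fr: "n \<bullet> (\<gamma> r - \<gamma> s) = 0" and FA: "n \<bullet> (\<gamma> mA - \<gamma> s) > 0" and FB: "n \<bullet> (\<gamma> mB - \<gamma> s) > 0"
  shows False
proof -
  define F where "F t = n \<bullet> (\<gamma> t - \<gamma> s)" for t
  have cF: "continuous_on S F" for S unfolding F_def by (rule continuous_on_inner_chord)
  define \<epsilon> where "\<epsilon> = min (F mA) (F mB) / 2"
  have \<epsilon>: "0 < \<epsilon>" "\<epsilon> < F mA" "\<epsilon> < F mB" using FA FB by (auto simp: \<epsilon>_def F_def)
  have F0: "F s = 0" "F r = 0" using Fr by (simp_all add: F_def)
  obtain t1 where t1: "s \<le> t1" "t1 \<le> mA" "F t1 = \<epsilon>"
    using IVT'[of F s \<epsilon> mA, OF _ _ _ cF] F0 \<epsilon> m by auto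
  obtain t2 where t2: "mA \<le> t2" "t2 \<le> r" "F t2 = \<epsilon>"
    using IVT2'[of F r \<epsilon> mA, OF _ _ _ cF] F0 \<epsilon> m by auto
  obtain t3 where t3: "mB \<le> t3" "t3 \<le> s" "F t3 = \<epsilon>"
    using IVT2'[of F s \<epsilon> mB, OF _ _ _ cF] F0 \<epsilon> m by auto
  have "t3 < t1" "t1 < t2" "t2 - t3 < 1"
    using t1 t2 t3 \<epsilon> F0 m by (auto simp: less_le)
  moreover have "n \<bullet> \<gamma> t1 = n \<bullet> \<gamma> t3" "n \<bullet> \<gamma> t2 = n \<bullet> \<gamma> t3"
    using t1(3) t2(3) t3(3) by (auto simp: F_def inner_diff_right)
  ultimately show False using Gamma1_no_three_points_ordered[OF G1 n] by blast
qed

lemma Gamma1_level_not_opposite_sign: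
  assumes G1: "Gamma1 \<gamma>" and n: "n$3 = 0" "n \<noteq> 0" and bh: "bh$3 = 0" "n \<bullet> bh = 0"
    and tangent: "n \<bullet> \<gamma>' s = 0" and transversal: "bh \<bullet> \<gamma>' s > 0"
    and m: "s < mA" "mA < r" "r - 1 < mB" "mB < s"
    and FA: "n \<bullet> (\<gamma> mA - \<gamma> s) > 0" and FB: "n \<bullet> (\<gamma> mB - \<gamma> s) < 0"
  shows False
proof -
  define F where "F t = n \<bullet> (\<gamma> t - \<gamma> s)" for t
  define H where "H t = bh \<bullet> (\<gamma> t - \<gamma> s)" for t
  define kA where "kA = 2 * \<bar>H mA\<bar> + 1"
  define kB where "kB = 2 * \<bar>H mB\<bar> + 1"
  define \<delta> where "\<delta> = min (F mA / kA) (- F mB / kB)"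
  have kA: "kA > 0" and kB: "kB > 0" by (simp_all add: kA_def kB_def add_nonneg_pos)
  have FA': "F mA > 0" and FB': "F mB < 0" using FA FB by (simp_all add: F_def)
  have \<delta>: "\<delta> > 0" using FA' FB' kA kB by (simp add: \<delta>_def divide_neg_pos)
  have dA: "\<delta> * kA \<le> F mA" and dB: "\<delta> * kB \<le> - F mB"
    using kA kB by (simp_all add: \<delta>_def pos_le_divide_eq[symmetric])
  define m where "m = n - \<delta> *\<^sub>R bh"
  define G where "G t = m \<bullet> (\<gamma> t - \<gamma> s)" for t
  have GFH: "G t = F t - \<delta> * H t" for t by (simp add: G_def F_def H_def m_def inner_diff_left)
  have "\<bar>\<delta> * H mA\<bar> \<le> \<delta> * (kA / 2)" "\<bar>\<delta> * H mB\<bar> \<le> \<delta> * (kB / 2)"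
    using \<delta> unfolding abs_mult by (auto intro!: mult_left_mono simp: kA_def kB_def)
  then have GA: "G mA > 0" and GB: "G mB < 0"
    using FA' FB' dA dB GFH[of mA] GFH[of mB] by (simp_all add: abs_le_iff)
  have m3: "m$3 = 0" using n bh by (simp add: m_def)
  have "m \<bullet> n = n \<bullet> n" using bh by (simp add: m_def inner_diff_left inner_commute[of bh n])
  then have mn: "m \<noteq> 0" using n by auto
  have "(G has_real_derivative (m \<bullet> \<gamma>' s)) (at s)"
    unfolding G_def by (rule inner_chord_has_real_derivative)
  moreover have "m \<bullet> \<gamma>' s < 0" using tangent transversal \<delta> by (simp add: m_def inner_diff_left)
  moreover have Gs: "G s = 0" by (simp add: G_def)
  ultimately obtain d1 d2 where d: "d1 > 0" "d2 > 0"
    "\<And>h. h > 0 \<Longrightarrow> h < d1 \<Longrightarrow> G (s + h) < 0" "\<And>h. h > 0 \<Longrightarrow> h < d2 \<Longrightarrow> G (s - h) > 0"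
    using DERIV_neg_dec_right DERIV_neg_dec_left by (metis add_0)
  define \<tau> where "\<tau> = min (min d1 d2) (min (mA - s) (s - mB)) / 2"
  have \<tau>: "\<tau> > 0" "\<tau> < d1" "\<tau> < d2" "\<tau> < mA - s" "\<tau> < s - mB"
    using d m by (auto simp: \<tau>_def)
  have cG: "continuous_on S G" for S unfolding G_def by (rule continuous_on_inner_chord)
  obtain t1 where t1: "s + \<tau> \<le> t1" "t1 \<le> mA" "G t1 = 0"
    using IVT'[of G "s + \<tau>" 0 mA, OF _ _ _ cG] d(3)[of \<tau>] \<tau> GA by auto
  obtain t2 where t2: "mB \<le> t2" "t2 \<le> s - \<tau>" "G t2 = 0"
    using IVT'[of G mB 0 "s - \<tau>", OF _ _ _ cG] d(4)[of \<tau>] \<tau> GB by auto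
  have "t2 < s" "s < t1" "t1 - t2 < 1" using t1 t2 \<tau> m by auto
  moreover have "m \<bullet> \<gamma> s = m \<bullet> \<gamma> t2" "m \<bullet> \<gamma> t1 = m \<bullet> \<gamma> t2"
    using t1(3) t2(3) by (auto simp: G_def inner_diff_right)
  ultimately show False using Gamma1_no_three_points_ordered[OF G1 m3 mn] by blast
qed

lemma Gamma1_vertical_tangent_plane_hits_arc:
  assumes G1: "Gamma1 \<gamma>" and n: "n$3 = 0" "n \<noteq> 0" and bh: "bh$3 = 0" "n \<bullet> bh = 0"
    and tangent: "n \<bullet> \<gamma>' s = 0" and transversal: "bh \<bullet> \<gamma>' s > 0"
    and m: "s < mA" "mA < r" "r - 1 < mB" "mB < s"
    and Fr: "n \<bullet> (\<gamma> r - \<gamma> s) = 0"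
    and FA: "n \<bullet> (\<gamma> mA - \<gamma> s) \<noteq> 0" and FB: "n \<bullet> (\<gamma> mB - \<gamma> s) \<noteq> 0"
  shows False
proof -
  have n': "(- n)$3 = 0" "- n \<noteq> 0" "(- n) \<bullet> bh = 0" "(- n) \<bullet> \<gamma>' s = 0"
    using n bh tangent by auto
  consider "n \<bullet> (\<gamma> mA - \<gamma> s) > 0" "n \<bullet> (\<gamma> mB - \<gamma> s) > 0"
    | "n \<bullet> (\<gamma> mA - \<gamma> s) > 0" "n \<bullet> (\<gamma> mB - \<gamma> s) < 0"
    | "(- n) \<bullet> (\<gamma> mA - \<gamma> s) > 0" "(- n) \<bullet> (\<gamma> mB - \<gamma> s) < 0"
    | "(- n) \<bullet> (\<gamma> mA - \<gamma> s) > 0" "(- n) \<bullet> (\<gamma> mB - \<gamma> s) > 0"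
    using FA FB unfolding inner_minus_left by linarith
  then show False
  proof cases
    case 1 then show False using Gamma1_level_not_same_sign[OF G1 n m Fr] by blast
  next
    case 2 then show False
      using Gamma1_level_not_opposite_sign[OF G1 n bh tangent transversal m] by blast
  next
    case 3 then show False
      using Gamma1_level_not_opposite_sign[OF G1 n'(1,2) bh(1) n'(3,4) transversal m] by blast
  next
    case 4 then show False
      using Gamma1_level_not_same_sign[OF G1 n'(1,2) m] Fr by simp
  qed
qed

lemma Gamma1_tangent_chord_plane_not_vertical_ordered:
  assumes G1: "Gamma1 \<gamma>" and G4': "Gamma4' \<gamma>" and sr: "s < r" "r < s + 1"
  shows "(cross3 (\<gamma>' s) (\<gamma> r - \<gamma> s))$3 \<noteq> 0"
proof
  assume z: "(cross3 (\<gamma>' s) (\<gamma> r - \<gamma> s))$3 = 0"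
  define b where "b = \<gamma>' s"
  define a :: "real^3" where "a = vector [- b$2, b$1, 0]"
  define bh :: "real^3" where "bh = vector [b$1, b$2, 0]"
  have "hnorm b \<noteq> 0" using G4' by (simp add: Gamma4'_iff_hnorm b_def)
  then have "0 < (b$1)^2 + (b$2)^2" using hnorm_pos_iff[of b] by (simp add: hnorm_def)
  then have transversal: "bh \<bullet> \<gamma>' s > 0"
    by (simp add: bh_def b_def[symmetric] inner_vec3 power2_eq_square)
  have a: "a$3 = 0" "a \<noteq> 0"
    using \<open>hnorm b \<noteq> 0\<close> by (auto simp: a_def hnorm_eq_0_iff vec_eq_iff forall_3)
  have bh: "bh$3 = 0" "a \<bullet> bh = 0" by (simp_all add: a_def bh_def inner_vec3)
  have tangent: "a \<bullet> \<gamma>' s = 0" by (simp add: a_def b_def[symmetric] inner_vec3)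
  have Fr: "a \<bullet> (\<gamma> r - \<gamma> s) = 0"
    using z by (simp add: a_def b_def inner_vec3 cross_components algebra_simps)
  define mA where "mA = (s + r) / 2"
  define mB where "mB = (r - 1 + s) / 2"
  have m: "s < mA" "mA < r" "r - 1 < mB" "mB < s" using sr by (auto simp: mA_def mB_def)
  have FA: "a \<bullet> (\<gamma> mA - \<gamma> s) \<noteq> 0"
    using Gamma1_no_three_points_ordered[OF G1 a, where x = s and y = mA and z = r] Fr m sr
    by (auto simp: inner_diff_right)
  have FB: "a \<bullet> (\<gamma> mB - \<gamma> s) \<noteq> 0"
    using Gamma1_no_three_points_ordered[OF G1 a, where x = mB and y = s and z = r] Fr m sr
    by (auto simp: inner_diff_right)
  show False
    using Gamma1_vertical_tangent_plane_hits_arc[OF G1 a bh(1,2) tangent transversal m Fr FA FB] .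
qed

lemma Gamma1_tangent_chord_plane_not_vertical:
  assumes G1: "Gamma1 \<gamma>" and G4': "Gamma4' \<gamma>" and "r - s \<notin> \<int>"
  shows "(cross3 (\<gamma>' s) (\<gamma> r - \<gamma> s))$3 \<noteq> 0"
proof -
  have "0 < frac (r - s)"
    using assms(3) frac_ge_0[of "r - s"] by (auto simp: order.order_iff_strict frac_eq_0_iff)
  moreover have "\<gamma> (s + frac (r - s)) = \<gamma> r"
    using periodic_of_int[of \<gamma> r "- \<lfloor>r - s\<rfloor>", OF periodic] by (simp add: frac_def)
  ultimately show ?thesis
    using Gamma1_tangent_chord_plane_not_vertical_ordered[OF G1 G4', of s "s + frac (r - s)"]
      frac_lt_1[of "r - s"] by simp
qed

lemma curve_quadratic_approx:
  assumes "e > 0"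
  obtains \<delta> where "\<delta> > 0" "\<And>x y. \<bar>x - a0\<bar> < \<delta> \<Longrightarrow> \<bar>y - a0\<bar> < \<delta> \<Longrightarrow>
    norm (\<gamma> y - \<gamma> x - (y - x) *\<^sub>R \<gamma>' x - ((y - x)^2 / 2) *\<^sub>R \<gamma>'' a0) \<le> e * (y - x)^2"
proof -
  obtain \<delta> where \<delta>: "\<delta> > 0" "\<And>x. dist x a0 < \<delta> \<Longrightarrow> dist (\<gamma>'' x) (\<gamma>'' a0) < e"
    using isCont_acceleration[of a0] assms unfolding continuous_at_eps_delta by blast
  have velocity_approx: "norm (\<gamma>' z - \<gamma>' x - (z - x) *\<^sub>R \<gamma>'' a0) \<le> \<bar>z - x\<bar> * e"
    if "x \<in> ball a0 \<delta>" "z \<in> ball a0 \<delta>" for x z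
  proof -
    have "norm (\<gamma>' z - \<gamma>' x - (z - x) *\<^sub>R \<gamma>'' a0) \<le> norm (z - x) * e"
    proof (rule vector_differentiable_bound_linearization[where S = "ball a0 \<delta>"])
      show "\<And>t. t \<in> ball a0 \<delta> \<Longrightarrow> (\<gamma>' has_vector_derivative \<gamma>'' t) (at t within ball a0 \<delta>)"
        using velocity_has_vector_derivative has_vector_derivative_at_within by blast
      show "closed_segment x z \<subseteq> ball a0 \<delta>" using that by (intro closed_segment_subset) auto
      show "\<And>t. t \<in> ball a0 \<delta> \<Longrightarrow> norm (\<gamma>'' t - \<gamma>'' a0) \<le> e"
        using \<delta>(2) by (auto simp: dist_norm dist_commute less_imp_le)
    qed (use \<delta> in simp)
    then show ?thesis by simp
  qed
  have "norm (\<gamma> y - \<gamma> x - (y - x) *\<^sub>R \<gamma>' x - ((y - x)^2 / 2) *\<^sub>R \<gamma>'' a0) \<le> e * (y - x)^2"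
    if "\<bar>x - a0\<bar> < \<delta>" "\<bar>y - a0\<bar> < \<delta>" for x y
  proof -
    have x: "x \<in> ball a0 \<delta>" and seg: "closed_segment x y \<subseteq> ball a0 \<delta>"
      using that by (simp_all add: closed_segment_subset dist_real_def)
    define g where "g t = \<gamma> t - ((t - x)^2 / 2) *\<^sub>R \<gamma>'' a0" for t
    define g' where "g' t = \<gamma>' t - (t - x) *\<^sub>R \<gamma>'' a0" for t
    have "(g has_vector_derivative g' t) (at t within closed_segment x y)" for t
    proof -
      have "((\<lambda>t. (t - x)^2 / 2) has_real_derivative (t - x)) (at t)"
        by (auto intro!: derivative_eq_intros)
      from has_vector_derivative_scaleR[OF this has_vector_derivative_const[of "\<gamma>'' a0"]]
      have "((\<lambda>t. ((t - x)^2 / 2) *\<^sub>R \<gamma>'' a0) has_vector_derivative (t - x) *\<^sub>R \<gamma>'' a0) (at t)"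
        by simp
      from has_vector_derivative_diff[OF curve_has_vector_derivative this]
      show ?thesis unfolding g_def g'_def by (rule has_vector_derivative_at_within)
    qed
    moreover have "norm (g' t - g' x) \<le> \<bar>y - x\<bar> * e" if "t \<in> closed_segment x y" for t
    proof -
      have "\<bar>t - x\<bar> \<le> \<bar>y - x\<bar>"
        using that by (auto simp: closed_segment_eq_real_ivl split: if_splits)
      then have "\<bar>t - x\<bar> * e \<le> \<bar>y - x\<bar> * e" using assms by (simp add: mult_right_mono)
      moreover have "g' t - g' x = \<gamma>' t - \<gamma>' x - (t - x) *\<^sub>R \<gamma>'' a0" by (simp add: g'_def)
      ultimately show ?thesis using velocity_approx[OF x, of t] seg that by auto
    qed
    ultimately have "norm (g y - g x - (y - x) *\<^sub>R g' x) \<le> norm (y - x) * (\<bar>y - x\<bar> * e)"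
      by (intro vector_differentiable_bound_linearization[where S = "closed_segment x y"]) auto
    then show ?thesis by (simp add: g_def g'_def power2_eq_square algebra_simps)
  qed
  then show ?thesis using \<delta>(1) that by blast
qed

lemma divided_diff_second_order:
  assumes "e > 0"
  obtains \<delta> where "\<delta> > 0" "\<And>x y. \<bar>x - a0\<bar> < \<delta> \<Longrightarrow> \<bar>y - a0\<bar> < \<delta> \<Longrightarrow>
    norm (divided_diff x y - \<gamma>' x - ((y - x) / 2) *\<^sub>R \<gamma>'' a0) \<le> e * \<bar>y - x\<bar>"
proof -
  obtain \<delta> where \<delta>: "\<delta> > 0" "\<And>x y. \<bar>x - a0\<bar> < \<delta> \<Longrightarrow> \<bar>y - a0\<bar> < \<delta> \<Longrightarrow>
    norm (\<gamma> y - \<gamma> x - (y - x) *\<^sub>R \<gamma>' x - ((y - x)^2 / 2) *\<^sub>R \<gamma>'' a0) \<le> e * (y - x)^2"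
    using curve_quadratic_approx[OF assms] by blast
  have "norm (divided_diff x y - \<gamma>' x - ((y - x) / 2) *\<^sub>R \<gamma>'' a0) \<le> e * \<bar>y - x\<bar>"
    if "\<bar>x - a0\<bar> < \<delta>" "\<bar>y - a0\<bar> < \<delta>" for x y
  proof (cases "x = y")
    case False
    have "divided_diff x y - \<gamma>' x - ((y - x) / 2) *\<^sub>R \<gamma>'' a0 =
        (1 / (y - x)) *\<^sub>R (\<gamma> y - \<gamma> x - (y - x) *\<^sub>R \<gamma>' x - ((y - x)^2 / 2) *\<^sub>R \<gamma>'' a0)"
      using False by (simp add: divided_diff_def scaleR_diff_right power2_eq_square)
    then have "norm (divided_diff x y - \<gamma>' x - ((y - x) / 2) *\<^sub>R \<gamma>'' a0) * \<bar>y - x\<bar> =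
        norm (\<gamma> y - \<gamma> x - (y - x) *\<^sub>R \<gamma>' x - ((y - x)^2 / 2) *\<^sub>R \<gamma>'' a0)"
      using False by simp
    also have "\<dots> \<le> (e * \<bar>y - x\<bar>) * \<bar>y - x\<bar>"
      using \<delta>(2)[OF that] by (simp add: power2_eq_square abs_mult_self)
    finally show ?thesis using False by simp
  qed (use assms in \<open>simp add: divided_diff_def\<close>)
  then show ?thesis using \<delta>(1) that by blast
qed

definition divided_diff2 :: "real \<Rightarrow> real \<Rightarrow> real \<Rightarrow> real^3" where
  "divided_diff2 a b c =
     (if a = c then (1/2) *\<^sub>R \<gamma>'' a else (1 / (c - a)) *\<^sub>R (divided_diff b c - divided_diff a b))"

lemma divided_diff2_near_diagonal:
  assumes "e > 0"
  obtains \<delta> where "\<delta> > 0" "\<And>a b c. a \<le> b \<Longrightarrow> b \<le> c \<Longrightarrow> \<bar>a - a0\<bar> < \<delta> \<Longrightarrow> \<bar>c - a0\<bar> < \<delta> \<Longrightarrow>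
    norm (divided_diff2 a b c - (1/2) *\<^sub>R \<gamma>'' a0) \<le> e"
proof -
  obtain \<delta>1 where \<delta>1: "\<delta>1 > 0" "\<And>x y. \<bar>x - a0\<bar> < \<delta>1 \<Longrightarrow> \<bar>y - a0\<bar> < \<delta>1 \<Longrightarrow>
    norm (divided_diff x y - \<gamma>' x - ((y - x) / 2) *\<^sub>R \<gamma>'' a0) \<le> e * \<bar>y - x\<bar>"
    using divided_diff_second_order[OF assms] by blast
  obtain \<delta>2 where \<delta>2: "\<delta>2 > 0" "\<And>x. dist x a0 < \<delta>2 \<Longrightarrow> dist (\<gamma>'' x) (\<gamma>'' a0) < e"
    using isCont_acceleration[of a0] assms unfolding continuous_at_eps_delta by blast
  have "norm (divided_diff2 a b c - (1/2) *\<^sub>R \<gamma>'' a0) \<le> e"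
    if abc: "a \<le> b" "b \<le> c" "\<bar>a - a0\<bar> < min \<delta>1 \<delta>2" "\<bar>c - a0\<bar> < min \<delta>1 \<delta>2" for a b c
  proof (cases "a = c")
    case True
    then have "norm (divided_diff2 a b c - (1/2) *\<^sub>R \<gamma>'' a0) = norm (\<gamma>'' a - \<gamma>'' a0) / 2"
      by (simp add: divided_diff2_def flip: scaleR_diff_right)
    moreover have "norm (\<gamma>'' a - \<gamma>'' a0) < e"
      using \<delta>2(2)[of a] abc by (simp add: dist_norm dist_real_def)
    ultimately show ?thesis using norm_ge_zero[of "\<gamma>'' a - \<gamma>'' a0"] by linarith
  next
    case False
    then have L: "c - a > 0" using abc by simp
    have b: "\<bar>b - a0\<bar> < \<delta>1" using abc by linarith
    define e1 where "e1 = divided_diff b c - \<gamma>' b - ((c - b) / 2) *\<^sub>R \<gamma>'' a0"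
    define e2 where "e2 = divided_diff b a - \<gamma>' b - ((a - b) / 2) *\<^sub>R \<gamma>'' a0"
    have "norm e1 \<le> e * (c - b)" "norm e2 \<le> e * (b - a)"
      unfolding e1_def e2_def using \<delta>1(2)[OF b] abc by fastforce+
    moreover have "divided_diff2 a b c - (1/2) *\<^sub>R \<gamma>'' a0 = (1 / (c - a)) *\<^sub>R (e1 - e2)"
    proof -
      have "(c - b) / 2 - (a - b) / 2 = (c - a) / 2" by argo
      then have "((c - b) / 2) *\<^sub>R \<gamma>'' a0 - ((a - b) / 2) *\<^sub>R \<gamma>'' a0 = ((c - a) / 2) *\<^sub>R \<gamma>'' a0"
        by (metis scaleR_diff_left)
      then have "e1 - e2 = divided_diff b c - divided_diff a b - ((c - a) / 2) *\<^sub>R \<gamma>'' a0"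
        unfolding e1_def e2_def divided_diff_commute[of b a] by (simp add: algebra_simps)
      then show ?thesis using L by (simp add: divided_diff2_def scaleR_diff_right)
    qed
    ultimately have "norm (divided_diff2 a b c - (1/2) *\<^sub>R \<gamma>'' a0)
        \<le> (e * (c - b) + e * (b - a)) / (c - a)"
      using L by (simp add: divide_right_mono norm_triangle_le_diff)
    also have "\<dots> = e" using L by (simp add: field_simps)
    finally show ?thesis .
  qed
  then show ?thesis using that \<delta>1(1) \<delta>2(1) by (metis min_less_iff_conj)
qed

lemma continuous_on_divided_diff2:
  "continuous_on triple_domain (\<lambda>q. divided_diff2 (left_param q) (mid_param q) (right_param q))"
  unfolding continuous_on_eq_continuous_within
proof
  fix q0 assume q0: "q0 \<in> triple_domain"
  obtain a0 L0 \<theta>0 where q0_eq: "q0 = (a0, L0, \<theta>0)" by (cases q0) auto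
  have dist_le: "\<bar>fst q - fst q0\<bar> \<le> dist q q0" "\<bar>fst (snd q) - fst (snd q0)\<bar> \<le> dist q q0" for q
    using dist_fst_le[of q q0] dist_fst_le[of "snd q" "snd q0"] dist_snd_le[of q q0]
    by (simp_all add: dist_real_def)
  show "continuous (at q0 within triple_domain)
      (\<lambda>q. divided_diff2 (left_param q) (mid_param q) (right_param q))"
  proof (cases "L0 > 0")
    case True
    define f where "f q = (1 / (right_param q - left_param q)) *\<^sub>R
        (divided_diff (mid_param q) (right_param q) - divided_diff (left_param q) (mid_param q))"
      for q
    have "continuous (at q0) f"
      unfolding f_def using True q0_eq
      by (intro continuous_intros continuous_divided_diff_comp continuous_params) auto
    then show ?thesis
    proof (rule continuous_transform_within[OF continuous_at_imp_continuous_at_within True q0])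
      fix q assume "q \<in> triple_domain" "dist q q0 < L0"
      then show "f q = divided_diff2 (left_param q) (mid_param q) (right_param q)"
        using dist_le(2)[of q] q0_eq by (cases q) (auto simp: f_def divided_diff2_def)
    qed
  next
    case False
    then have L0: "L0 = 0" using q0 q0_eq by (simp add: triple_domain_iff)
    show ?thesis unfolding continuous_within_eps_delta
    proof (intro allI impI)
      fix e :: real assume "e > 0"
      then obtain \<delta> where \<delta>: "\<delta> > 0" "\<And>a b c. a \<le> b \<Longrightarrow> b \<le> c \<Longrightarrow> \<bar>a - a0\<bar> < \<delta> \<Longrightarrow>
          \<bar>c - a0\<bar> < \<delta> \<Longrightarrow> norm (divided_diff2 a b c - (1/2) *\<^sub>R \<gamma>'' a0) \<le> e / 2"
        using divided_diff2_near_diagonal[of "e/2" a0] by (metis half_gt_zero)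
      have "dist (divided_diff2 (left_param q) (mid_param q) (right_param q))
          (divided_diff2 (left_param q0) (mid_param q0) (right_param q0)) < e"
        if q: "q \<in> triple_domain" "dist q q0 < \<delta> / 3" for q
      proof -
        obtain a L \<theta> where q_eq: "q = (a, L, \<theta>)" by (cases q) auto
        have "0 \<le> L" "0 \<le> \<theta>" "\<theta> \<le> 1" using q(1) by (simp_all add: q_eq triple_domain_iff)
        moreover have "\<bar>a - a0\<bar> < \<delta> / 3" "L < \<delta> / 3"
          using dist_le[of q] q(2) L0 by (simp_all add: q_eq q0_eq)
        moreover have "\<theta> * L \<le> L" using calculation by (simp add: mult_left_le_one_le)
        ultimately have "norm (divided_diff2 a (a + \<theta> * L) (a + L) - (1/2) *\<^sub>R \<gamma>'' a0) \<le> e / 2"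
          using \<delta>(1) mult_nonneg_nonneg[of \<theta> L] by - (rule \<delta>(2); arith)
        then show ?thesis
          using \<open>e > 0\<close> by (simp add: q_eq q0_eq L0 divided_diff2_def dist_norm)
      qed
      then show "\<exists>d>0. \<forall>q\<in>triple_domain. dist q q0 < d \<longrightarrow>
          dist (divided_diff2 (left_param q) (mid_param q) (right_param q))
            (divided_diff2 (left_param q0) (mid_param q0) (right_param q0)) < e"
        using \<delta>(1) by (intro exI[of _ "\<delta> / 3"]) auto
    qed
  qed
qed

definition three_point_normal :: "real \<times> real \<times> real \<Rightarrow> real^3" where
  "three_point_normal q = cross3 (divided_diff (left_param q) (mid_param q))
     (divided_diff2 (left_param q) (mid_param q) (right_param q))"

lemma continuous_on_three_point_normal: "continuous_on triple_domain three_point_normal"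
  unfolding three_point_normal_def
  by (intro continuous_on_cross continuous_on_divided_diff2 continuous_at_imp_continuous_on ballI
      continuous_divided_diff_comp continuous_params)

lemma three_point_normal_collapsed:
  assumes "left_param q \<noteq> right_param q"
  shows "three_point_normal q = (1 / (right_param q - left_param q)) *\<^sub>R
    cross3 (divided_diff (left_param q) (mid_param q)) (divided_diff (mid_param q) (right_param q))"
  using assms
  by (simp add: three_point_normal_def divided_diff2_def cross_mult_right Cross3.right_diff_distrib)

lemma three_point_normal_distinct:
  assumes "left_param q < mid_param q" "mid_param q < right_param q"
  shows "three_point_normal q =
    (1 / (right_param q - left_param q) *
       (1 / (mid_param q - left_param q) * (1 / (right_param q - mid_param q)))) *\<^sub>R
    cross3 (\<gamma> (mid_param q) - \<gamma> (left_param q)) (\<gamma> (right_param q) - \<gamma> (mid_param q))"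
  using assms
  by (simp add: three_point_normal_collapsed divided_diff_def cross_mult_left cross_mult_right)

lemma three_point_normal_not_vertical:
  assumes G1: "Gamma1 \<gamma>" and G4': "Gamma4' \<gamma>" and G5: "Gamma5 \<gamma> \<Delta>"
    and q: "q \<in> triple_domain"
  shows "three_point_normal q $ 3 \<noteq> 0"
proof -
  obtain a L \<theta> where q_eq: "q = (a, L, \<theta>)" by (cases q) auto
  have ranges: "0 \<le> L" "L \<le> 2/3" "0 \<le> \<theta>" "\<theta> \<le> 1" using q by (simp_all add: q_eq triple_domain_iff)
  show ?thesis
  proof (cases "L = 0")
    case True
    then have "three_point_normal q = (1/2) *\<^sub>R cross3 (\<gamma>' a) (\<gamma>'' a)"
      by (simp add: q_eq three_point_normal_def divided_diff_def divided_diff2_def cross_mult_right)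
    then show ?thesis using Gamma5_osculating_not_vertical[OF G5, of a] by simp
  next
    case False
    then have L: "0 < L" "(a + L) - a \<notin> \<int>" "a - (a + L) \<notin> \<int>"
      using ranges not_Ints_abs_lt_1[of L] not_Ints_abs_lt_1[of "- L"] by auto
    consider "\<theta> = 0" | "\<theta> = 1" | "0 < \<theta>" "\<theta> < 1" using ranges by linarith
    then show ?thesis
    proof cases
      case 1
      then have "three_point_normal q = (1 / L * (1 / L)) *\<^sub>R cross3 (\<gamma>' a) (\<gamma> (a + L) - \<gamma> a)"
        using L by (simp add: q_eq three_point_normal_collapsed divided_diff_def cross_mult_right)
      then show ?thesis
        using Gamma1_tangent_chord_plane_not_vertical[OF G1 G4' L(2)] L by simp
    next
      case 2
      then have "three_point_normal q = (1 / L * (1 / L)) *\<^sub>R cross3 (\<gamma> (a + L) - \<gamma> a) (\<gamma>' (a + L))"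
        using L by (simp add: q_eq three_point_normal_collapsed divided_diff_def cross_mult_left)
      moreover have "(cross3 (\<gamma> (a + L) - \<gamma> a) (\<gamma>' (a + L)))$3 =
          (cross3 (\<gamma>' (a + L)) (\<gamma> a - \<gamma> (a + L)))$3"
        by (simp add: cross_components algebra_simps)
      ultimately show ?thesis
        using Gamma1_tangent_chord_plane_not_vertical[OF G1 G4' L(3)] L by simp
    next
      case 3
      then have "a < a + \<theta> * L" "a + \<theta> * L < a + L"
        using L by (simp_all add: mult_strict_right_mono)
      then show ?thesis
        using three_point_normal_distinct[of q] ranges 3
          Gamma1_chord_plane_not_vertical[OF G1, of a "a + \<theta> * L" "a + L"]
        by (simp add: q_eq)
    qed
  qed
qed

lemma short_arc_triple:
  assumes "0 \<le> x" "x < y" "y < z" "z < 1" and "\<gamma> x \<in> S" "\<gamma> y \<in> S" "\<gamma> z \<in> S"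
  obtains a b c where "0 \<le> a" "a \<le> 1" "a < b" "b < c" "c - a \<le> 2/3" "\<gamma> a \<in> S" "\<gamma> b \<in> S" "\<gamma> c \<in> S"
proof -
  have "\<gamma> (x + 1) \<in> S" "\<gamma> (y + 1) \<in> S" using assms periodic by auto
  then consider "z - x \<le> 2/3" | "y - x \<ge> 1/3" | "z - y \<ge> 1/3" by linarith
  then show ?thesis
  proof cases
    case 1 then show ?thesis using assms that[of x y z] by auto
  next
    case 2 then show ?thesis
      using assms \<open>\<gamma> (x + 1) \<in> S\<close> that[of y z "x + 1"] by auto
  next
    case 3 then show ?thesis
      using assms \<open>\<gamma> (x + 1) \<in> S\<close> \<open>\<gamma> (y + 1) \<in> S\<close> that[of z "x + 1" "y + 1"] by auto
  qed
qed

lemma Gamma1_Gamma4'_Gamma5_imp_Gamma2: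
  assumes G1: "Gamma1 \<gamma>" and G4': "Gamma4' \<gamma>" and G5: "Gamma5 \<gamma> \<Delta>5"
  obtains \<Delta> where "\<Delta> \<ge> 0" "Gamma2 \<gamma> \<Delta>"
proof -
  have "compact triple_domain" unfolding triple_domain_def by (intro compact_Times compact_Icc)
  moreover have "continuous_on triple_domain (\<lambda>q. hnorm (three_point_normal q))"
      "continuous_on triple_domain (\<lambda>q. three_point_normal q $ 3)"
    unfolding hnorm_def by (auto intro!: continuous_intros continuous_on_three_point_normal)
  moreover note three_point_normal_not_vertical[OF G1 G4' G5]
  ultimately obtain D where "D \<ge> 0" and D: "\<And>q. q \<in> triple_domain \<Longrightarrow>
      \<bar>hnorm (three_point_normal q)\<bar> \<le> D * \<bar>three_point_normal q $ 3\<bar>"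
    by (rule continuous_ratio_bounded) auto
  have bound: "plane_slope n \<le> ereal D" if n: "n \<noteq> 0" "npts \<gamma> (plane n c0) \<ge> 3" for n c0
  proof -
    obtain x y z where xyz: "x \<in> hits \<gamma> (plane n c0)" "y \<in> hits \<gamma> (plane n c0)"
      "z \<in> hits \<gamma> (plane n c0)" and distinct: "x \<noteq> y" "y \<noteq> z" "x \<noteq> z"
      by (rule npts_ge_3E[OF n(2)])
    obtain x' y' z' where sorted: "x' < y'" "y' < z'" "{x', y', z'} = {x, y, z}"
      using three_distinct_sorted[OF distinct] by blast
    then have "{x', y', z'} \<subseteq> hits \<gamma> (plane n c0)" using xyz by simp
    then have "0 \<le> x'" "z' < 1" "\<gamma> x' \<in> plane n c0" "\<gamma> y' \<in> plane n c0" "\<gamma> z' \<in> plane n c0"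
      by (auto simp: hits_def)
    then obtain a b c where abc: "0 \<le> a" "a \<le> 1" "a < b" "b < c" "c - a \<le> 2/3"
      and on_plane: "\<gamma> a \<in> plane n c0" "\<gamma> b \<in> plane n c0" "\<gamma> c \<in> plane n c0"
      by (rule short_arc_triple[where S = "plane n c0", OF _ sorted(1,2)])
    define q where "q = (a, c - a, (b - a) / (c - a))"
    have q: "q \<in> triple_domain" "left_param q = a" "mid_param q = b" "right_param q = c"
      using abc by (simp_all add: q_def triple_domain_iff)
    define k where "k = 1 / (c - a) * (1 / (b - a) * (1 / (c - b)))"
    have normal_eq: "three_point_normal q = k *\<^sub>R cross3 (\<gamma> b - \<gamma> a) (\<gamma> c - \<gamma> b)"
      using three_point_normal_distinct[of q] abc q by (simp add: k_def)
    have "k \<noteq> 0" using abc by (simp add: k_def)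
    have "plane_slope (three_point_normal q) \<le> ereal D"
      using D[OF q(1)] three_point_normal_not_vertical[OF G1 G4' G5 q(1)]
      by (simp add: plane_slope_le_iff hnorm_nonneg)
    then have "plane_slope (cross3 (\<gamma> b - \<gamma> a) (\<gamma> c - \<gamma> b)) \<le> ereal D"
      unfolding normal_eq plane_slope_scaleR[OF \<open>k \<noteq> 0\<close>] .
    moreover have "n \<bullet> (\<gamma> b - \<gamma> a) = 0" "n \<bullet> (\<gamma> c - \<gamma> b) = 0"
      using on_plane by (simp_all add: plane_def inner_diff_right)
    ultimately show ?thesis using plane_slope_le_of_orthogonal_cross n(1) by blast
  qed
  then have "Gamma2 \<gamma> D" unfolding Gamma2_def by (intro allI impI bound)
  with \<open>D \<ge> 0\<close> show ?thesis by (rule that)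
qed

end

theorem mainTheorem9:
  fixes \<gamma> :: "real \<Rightarrow> real^3"
  assumes "smooth_immersed_closed_curve \<gamma>"
  shows "(Gamma1 \<gamma> \<longleftrightarrow> Gamma1' \<gamma>)
       \<and> ((\<exists>\<Delta>\<ge>0. Gamma4 \<gamma> \<Delta>) \<longleftrightarrow> Gamma4' \<gamma>)
       \<and> (\<forall>\<Delta>\<ge>0. Gamma2 \<gamma> \<Delta> \<longrightarrow> Gamma3 \<gamma> \<Delta>)
       \<and> (\<forall>\<Delta>\<ge>0. Gamma3 \<gamma> \<Delta> \<longrightarrow> Gamma4 \<gamma> \<Delta>)
       \<and> (Gamma1 \<gamma> \<longrightarrow> (\<exists>\<Delta>\<ge>0. Gamma4 \<gamma> \<Delta>) \<longrightarrow> (\<exists>\<Delta>\<ge>0. Gamma3 \<gamma> \<Delta>))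
       \<and> (Gamma1 \<gamma> \<longrightarrow> (\<exists>\<Delta>\<ge>0. Gamma5 \<gamma> \<Delta>) \<longrightarrow>
            (\<exists>\<Delta>\<ge>0. Gamma3 \<gamma> \<Delta>) \<longrightarrow> (\<exists>\<Delta>\<ge>0. Gamma2 \<gamma> \<Delta>))"
proof -
  interpret smooth_closed_curve \<gamma> by unfold_locales (rule assms)
  have tangent_bound_iff: "(\<exists>\<Delta>\<ge>0. Gamma4 \<gamma> \<Delta>) \<longleftrightarrow> Gamma4' \<gamma>"
    by (rule Gamma4_iff_Gamma4')
  have "Gamma1 \<gamma> \<Longrightarrow> Gamma4' \<gamma> \<Longrightarrow> \<exists>\<Delta>\<ge>0. Gamma3 \<gamma> \<Delta>"
    by (blast elim: Gamma1_Gamma4'_imp_Gamma3)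
  moreover have "Gamma1 \<gamma> \<Longrightarrow> Gamma5 \<gamma> \<Delta>5 \<Longrightarrow> Gamma4' \<gamma> \<Longrightarrow> \<exists>\<Delta>\<ge>0. Gamma2 \<gamma> \<Delta>" for \<Delta>5
    by (blast elim: Gamma1_Gamma4'_Gamma5_imp_Gamma2)
  moreover have "\<Delta> \<ge> 0 \<Longrightarrow> Gamma3 \<gamma> \<Delta> \<Longrightarrow> Gamma4' \<gamma>" for \<Delta>
    using tangent_bound_iff Gamma3_imp_Gamma4 by blast
  ultimately show ?thesis
    using Gamma1_iff_Gamma1' tangent_bound_iff Gamma2_imp_Gamma3 Gamma3_imp_Gamma4 by blast
qed

end
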